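(* Let $d\ge1$, let $S\subset\mathbb R^d$ be a regular simplex of unit side length, let $k,z\ge1$ be integers and set $s=zkd$. Let $A_s$ be the collection of $(d+1)^s$ simplices in the $s$-stage uniform subdivision of $S$. Then at most a $z(1-e^{-d})^k$ fraction of the simplices in $A_s$ have diameter larger than $(d/(d+1))^z$.
   Context: The $i$-stage uniform subdivision of a simplex $S'$ is defined recursively: the $0$-stage subdivision is $\{S'\}$; the $(i+1)$-stage subdivision is obtained from the $i$-stage subdivision by replacing each simplex $T$ in it, with vertices $v_0,\dots,v_d$ and barycenter $b=(v_0+\dots+v_d)/(d+1)$, by the $d+1$ simplices obtained from $T$ by replacing one vertex $v_m$ with $b$ ($m=0,\dots,d$). Thus the $i$-stage subdivision consists of $(d+1)^i$ simplices. The diameter of a simplex is the largest distance between two of its vertices. *)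

theory Defs
  imports "HOL-Analysis.Analysis"
begin

text \<open>A simplex is represented by the list of its vertices (v_0,...,v_d).\<close>

definition barycenter :: "'a::real_vector list \<Rightarrow> 'a" where
  "barycenter vs = (1 / real (length vs)) *\<^sub>R sum_list vs"

definition children :: "'a::real_vector list \<Rightarrow> 'a list list" where
  "children vs = map (\<lambda>m. vs[m := barycenter vs]) [0..<length vs]"

fun subdiv :: "nat \<Rightarrow> 'a::real_vector list \<Rightarrow> 'a list list" where
  "subdiv 0 T = [T]"
| "subdiv (Suc i) T = concat (map children (subdiv i T))"

definition regular_unit_simplex :: "'a::real_normed_vector list \<Rightarrow> nat \<Rightarrow> bool" where
  "regular_unit_simplex vs d \<longleftrightarrow> length vs = d + 1 \<and>
     (\<forall>i<d+1. \<forall>j<d+1. i \<noteq> j \<longrightarrow> dist (vs!i) (vs!j) = 1)"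

end

theory Submission
  imports Defs
begin

text \<open>
  Label the simplices of the \<open>s\<close>-stage subdivision by the words of length \<open>s\<close> over
  \<open>{0..d}\<close> recording which vertex is replaced at each stage. No step increases the diameter, and
  \<open>d\<close> consecutive steps replacing \<open>d\<close> distinct vertices shrink it by the factor \<open>d/(d+1)\<close>:
  afterwards every pair of vertices contains a replaced one, and a replaced vertex stays within
  \<open>d/(d+1)\<close> times the original diameter of all others. Cut a word of length \<open>zkd\<close> into
  \<open>z\<close> chunks of \<open>k\<close> blocks of length \<open>d\<close>. If every chunk contains a block without a
  repeated letter, the diameter is at most \<open>(d/(d+1))^z\<close>. A block repeats a letter for a
  fraction \<open>1 - (d+1)!/(d+1)^d \<le> 1 - e^-d\<close> of all words, so a fixed chunk consists of
  such blocks only for a fraction at most \<open>(1 - e^-d)^k\<close>, and the union bound over the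
  \<open>z\<close> chunks gives the claim.
\<close>

text \<open>\<open>subsimplex T [m\<^sub>1, \<dots>, m\<^sub>i]\<close> replaces vertex \<open>m\<^sub>i\<close> first and \<open>m\<^sub>1\<close> last.\<close>

definition subsimplex :: "'a::real_vector list \<Rightarrow> nat list \<Rightarrow> 'a list" where
  "subsimplex T w = foldr (\<lambda>m S. S[m := barycenter S]) w T"

lemma subsimplex_Nil [simp]: "subsimplex T [] = T"
  by (simp add: subsimplex_def)

lemma subsimplex_Cons [simp]:
  "subsimplex T (m # w) = (subsimplex T w)[m := barycenter (subsimplex T w)]"
  by (simp add: subsimplex_def)

lemma subsimplex_append: "subsimplex T (u @ v) = subsimplex (subsimplex T v) u"
  by (simp add: subsimplex_def)

lemma length_subsimplex [simp]: "length (subsimplex T w) = length T"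
  by (induction w) simp_all

lemma subdiv_eq_map_subsimplex:
  "subdiv i T = map (subsimplex T) (List.n_lists i [0..<length T])"
  by (induction i) (auto simp: map_concat comp_def children_def)

lemma length_subdiv: "length (subdiv i T) = length T ^ i"
  by (simp add: subdiv_eq_map_subsimplex length_n_lists)

lemma length_filter_subdiv:
  "length (filter P (subdiv i T)) =
     card {w. set w \<subseteq> {0..<length T} \<and> length w = i \<and> P (subsimplex T w)}"
proof -
  have "length (filter P (subdiv i T)) = length (filter (P \<circ> subsimplex T) (List.n_lists i [0..<length T]))"
    by (simp add: subdiv_eq_map_subsimplex filter_map)
  also have "\<dots> = card (set (filter (P \<circ> subsimplex T) (List.n_lists i [0..<length T])))"
    by (rule distinct_card[symmetric]) (simp add: distinct_n_lists)
  also have "set (filter (P \<circ> subsimplex T) (List.n_lists i [0..<length T])) =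
      {w. set w \<subseteq> {0..<length T} \<and> length w = i \<and> P (subsimplex T w)}"
    by (auto simp: set_n_lists)
  finally show ?thesis .
qed

lemma dist_barycenter_nth_le:
  fixes S :: "'a::real_normed_vector list"
  assumes j: "j < length S"
  shows "dist (barycenter S) (S ! j) \<le> (real (length S) - 1) / real (length S) * diameter (set S)"
proof -
  define L where "L = length S"
  have "L > 0" using j unfolding L_def by linarith
  then have L: "real L > 0" by simp
  have "S ! j = (1 / real L) *\<^sub>R (\<Sum>i<L. S ! j)"
    using L by (simp add: sum_constant_scaleR)
  then have "barycenter S - S ! j = (1 / real L) *\<^sub>R (\<Sum>i<L. S ! i - S ! j)"
    by (simp add: barycenter_def L_def sum_list_sum_nth atLeast0LessThan sum_subtractf
        scaleR_diff_right)
  then have "dist (barycenter S) (S ! j) = norm (\<Sum>i<L. S ! i - S ! j) / real L"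
    by (simp add: dist_norm)
  moreover have "norm (\<Sum>i<L. S ! i - S ! j) \<le> (real L - 1) * diameter (set S)"
  proof -
    have "norm (\<Sum>i<L. S ! i - S ! j) \<le> (\<Sum>i<L. norm (S ! i - S ! j))"
      by (rule norm_sum)
    also have "\<dots> = (\<Sum>i\<in>{..<L} - {j}. norm (S ! i - S ! j))"
      using j by (simp add: L_def sum.remove[of "{..<length S}" j])
    also have "\<dots> \<le> (\<Sum>i\<in>{..<L} - {j}. diameter (set S))"
      using j by (intro sum_mono) (auto simp: L_def dist_norm[symmetric]
          intro!: diameter_bounded_bound finite_imp_bounded)
    also have "\<dots> = (real L - 1) * diameter (set S)"
      using j by (simp add: L_def of_nat_diff)
    finally show ?thesis .
  qed
  ultimately have "dist (barycenter S) (S ! j) \<le> (real L - 1) * diameter (set S) / real L"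
    using L by (metis divide_right_mono less_eq_real_def)
  then show ?thesis
    unfolding L_def by (simp only: times_divide_eq_left)
qed

lemma diameter_update_barycenter_le:
  fixes S :: "'a::real_normed_vector list"
  shows "diameter (set (S[m := barycenter S])) \<le> diameter (set S)"
proof -
  let ?D = "diameter (set S)"
  have D: "0 \<le> ?D" by (rule diameter_ge_0) (simp add: finite_imp_bounded)
  have c: "(real (length S) - 1) / real (length S) \<le> 1" by (simp add: divide_le_eq_1)
  have near: "dist (barycenter S) x \<le> ?D" if x: "x \<in> set S" for x
  proof -
    obtain j where j: "j < length S" and xj: "x = S ! j" using x by (auto simp: in_set_conv_nth)
    have "dist (barycenter S) (S ! j) \<le> (real (length S) - 1) / real (length S) * ?D"
      using j by (rule dist_barycenter_nth_le)
    also have "\<dots> \<le> ?D"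
      using mult_right_mono[OF c D] by simp
    finally show ?thesis using xj by simp
  qed
  have vertices: "dist x y \<le> ?D" if "x \<in> set S" "y \<in> set S" for x y
    using that by (simp add: diameter_bounded_bound finite_imp_bounded)
  show ?thesis
  proof (rule diameter_le)
    fix x y assume "x \<in> set (S[m := barycenter S])" "y \<in> set (S[m := barycenter S])"
    then have "x \<in> insert (barycenter S) (set S)" "y \<in> insert (barycenter S) (set S)"
      by (meson set_update_subset_insert subsetD)+
    then have "dist x y \<le> ?D"
      using near[of x] near[of y] vertices[of x y] D by (auto simp: dist_commute)
    then show "norm (x - y) \<le> ?D" by (simp add: dist_norm)
  qed (use D in simp)
qed

lemma diameter_subsimplex_le:
  fixes T :: "'a::real_normed_vector list"
  shows "diameter (set (subsimplex T w)) \<le> diameter (set T)"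
  by (induction w) (auto intro: order_trans[OF diameter_update_barycenter_le])

lemma dist_barycenter_subsimplex_le:
  fixes T :: "'a::real_normed_vector list"
  assumes "j < length T"
  shows "dist (barycenter (subsimplex T w)) (subsimplex T w ! j)
           \<le> (real (length T) - 1) / real (length T) * diameter (set T)"
proof -
  have "0 \<le> (real (length T) - 1) / real (length T)"
    using assms by simp
  then have "(real (length T) - 1) / real (length T) * diameter (set (subsimplex T w))
      \<le> (real (length T) - 1) / real (length T) * diameter (set T)"
    by (intro mult_left_mono diameter_subsimplex_le)
  with dist_barycenter_nth_le[of j "subsimplex T w"] assms show ?thesis
    by simp
qed

lemma dist_subsimplex_replaced_le:
  fixes T :: "'a::real_normed_vector list"
  assumes "i \<in> set w" "i < length T" "j < length T"
  shows "dist (subsimplex T w ! i) (subsimplex T w ! j)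
           \<le> (real (length T) - 1) / real (length T) * diameter (set T)"
  using assms(1)
proof (induction w)
  case Nil
  then show ?case by simp
next
  case (Cons m w)
  let ?c = "(real (length T) - 1) / real (length T)"
  let ?R = "subsimplex T w"
  have near: "dist (barycenter ?R) (?R ! l) \<le> ?c * diameter (set T)" if "l < length T" for l
    using that by (rule dist_barycenter_subsimplex_le)
  have "0 \<le> ?c * diameter (set T)"
    using assms(2) by (simp add: diameter_ge_0 finite_imp_bounded)
  then show ?case
    using Cons near[of i] near[of j] assms(2,3)
    by (cases "i = m"; cases "j = m") (auto simp: dist_commute)
qed

text \<open>Any two distinct vertices include a replaced one, which is close to every vertex.\<close>

lemma diameter_subsimplex_distinct_le:
  fixes T :: "'a::real_normed_vector list"
  assumes "distinct w" "length w = length T - 1" "set w \<subseteq> {0..<length T}"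
  shows "diameter (set (subsimplex T w))
           \<le> (real (length T) - 1) / real (length T) * diameter (set T)"
proof (rule diameter_le)
  let ?c = "(real (length T) - 1) / real (length T)"
  have "0 \<le> ?c"
    by (cases "length T") simp_all
  then have nonneg: "0 \<le> ?c * diameter (set T)"
    by (simp add: mult_nonneg_nonneg diameter_ge_0 finite_imp_bounded del: times_divide_eq_left)
  then show "set (subsimplex T w) \<noteq> {} \<or> 0 \<le> ?c * diameter (set T)" ..
  have "card ({0..<length T} - set w) = length T - (length T - 1)"
    using assms by (simp add: card_Diff_subset distinct_card)
  then have "card ({0..<length T} - set w) = 1" if "0 < length T"
    using that by linarith
  then have replaced: "i \<in> set w \<or> j \<in> set w" if "i < length T" "j < length T" "i \<noteq> j" for i j
    using that card_mono[of "{0..<length T} - set w" "{i, j}"] by fastforce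
  fix x y assume "x \<in> set (subsimplex T w)" "y \<in> set (subsimplex T w)"
  then obtain i j where ij: "i < length T" "j < length T"
    and "x = subsimplex T w ! i" "y = subsimplex T w ! j"
    by (auto simp: in_set_conv_nth)
  then show "norm (x - y) \<le> ?c * diameter (set T)"
    using replaced[OF ij] dist_subsimplex_replaced_le[OF _ ij] dist_subsimplex_replaced_le[OF _ ij(2,1)]
      nonneg by (cases "i = j") (auto simp: dist_norm norm_minus_commute simp del: times_divide_eq_left)
qed

definition block :: "nat \<Rightarrow> 'a list \<Rightarrow> nat \<Rightarrow> 'a list" where
  "block m w i = take m (drop (i * m) w)"

lemma block_0 [simp]: "block m w 0 = take m w"
  by (simp add: block_def)

lemma block_Suc [simp]: "block m w (Suc i) = block m (drop m w) i"
  by (simp add: block_def add.commute)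

lemma length_block: "Suc i * m \<le> length w \<Longrightarrow> length (block m w i) = m"
  by (simp add: block_def)

lemma set_block_subset: "set (block m w i) \<subseteq> set w"
  unfolding block_def by (meson order_trans set_drop_subset set_take_subset)

lemma diameter_subsimplex_distinct_block_le:
  fixes T :: "'a::real_normed_vector list"
  assumes "distinct (block (length T - 1) w i)" "length (block (length T - 1) w i) = length T - 1"
    and "set w \<subseteq> {0..<length T}"
  shows "diameter (set (subsimplex T w))
           \<le> (real (length T) - 1) / real (length T) * diameter (set T)"
proof -
  let ?m = "length T - 1"
  let ?c = "(real (length T) - 1) / real (length T)"
  define u where "u = take (i * ?m) w"
  define v where "v = drop ?m (drop (i * ?m) w)"
  have w: "w = u @ block ?m w i @ v"
    unfolding u_def v_def block_def by (simp only: append_take_drop_id)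
  have "0 \<le> ?c"
    by (cases "length T") simp_all
  have "diameter (set (subsimplex T w)) \<le> diameter (set (subsimplex (subsimplex T v) (block ?m w i)))"
    by (subst w) (simp add: subsimplex_append diameter_subsimplex_le)
  also have "\<dots> \<le> ?c * diameter (set (subsimplex T v))"
    using assms set_block_subset[of ?m w i]
      diameter_subsimplex_distinct_le[of "block ?m w i" "subsimplex T v"] by auto
  also have "\<dots> \<le> ?c * diameter (set T)"
    using \<open>0 \<le> ?c\<close> by (intro mult_left_mono diameter_subsimplex_le)
  finally show ?thesis .
qed

lemma diameter_subsimplex_le_power:
  fixes T :: "'a::real_normed_vector list"
  assumes "length w = z * K" "0 \<le> c"
    and contracts: "\<And>j (S :: 'a list). j < z \<Longrightarrow> length S = length T \<Longrightarrow>
        diameter (set (subsimplex S (block K w j))) \<le> c * diameter (set S)"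
  shows "diameter (set (subsimplex T w)) \<le> c ^ z * diameter (set T)"
  using assms(1) contracts
proof (induction z arbitrary: w)
  case 0
  then show ?case by simp
next
  case (Suc z)
  have "w = take K w @ drop K w" by simp
  then have "diameter (set (subsimplex T w)) = diameter (set (subsimplex (subsimplex T (drop K w)) (block K w 0)))"
    by (metis block_0 subsimplex_append)
  also have "\<dots> \<le> c * diameter (set (subsimplex T (drop K w)))"
    using Suc.prems(2)[of 0 "subsimplex T (drop K w)"] by simp
  also have "\<dots> \<le> c * (c ^ z * diameter (set T))"
  proof (rule mult_left_mono[OF Suc.IH \<open>0 \<le> c\<close>])
    show "length (drop K w) = z * K" using Suc.prems(1) by simp
    show "diameter (set (subsimplex S (block K (drop K w) j))) \<le> c * diameter (set S)"
      if "j < z" "length S = length T" for j and S :: "'a list"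
      using that Suc.prems(2)[of "Suc j" S] by simp
  qed
  finally show ?case by simp
qed

lemma card_lists_append:
  assumes "finite A"
  shows "card {w. set w \<subseteq> A \<and> length w = a + b \<and> P (take a w) \<and> Q (drop a w)} =
    card {u. set u \<subseteq> A \<and> length u = a \<and> P u} * card {v. set v \<subseteq> A \<and> length v = b \<and> Q v}"
proof -
  let ?U = "{u. set u \<subseteq> A \<and> length u = a \<and> P u}"
  let ?V = "{v. set v \<subseteq> A \<and> length v = b \<and> Q v}"
  have "{w. set w \<subseteq> A \<and> length w = a + b \<and> P (take a w) \<and> Q (drop a w)} = (\<lambda>(u, v). u @ v) ` (?U \<times> ?V)"
  proof (intro equalityI subsetI)
    fix w assume "w \<in> {w. set w \<subseteq> A \<and> length w = a + b \<and> P (take a w) \<and> Q (drop a w)}"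
    then have "(take a w, drop a w) \<in> ?U \<times> ?V"
      by (auto dest: in_set_takeD in_set_dropD)
    then show "w \<in> (\<lambda>(u, v). u @ v) ` (?U \<times> ?V)"
      by (metis (no_types, lifting) append_take_drop_id case_prod_conv image_eqI)
  qed auto
  moreover have "inj_on (\<lambda>(u, v). u @ v) (?U \<times> ?V)"
    by (auto simp: inj_on_def)
  ultimately show ?thesis
    by (simp add: card_image card_cartesian_product)
qed

lemma card_lists_blocks:
  assumes "finite A"
  shows "card {w. set w \<subseteq> A \<and> length w = k * m \<and> (\<forall>i<k. P i (block m w i))} =
    (\<Prod>i<k. card {u. set u \<subseteq> A \<and> length u = m \<and> P i u})"
proof (induction k arbitrary: P)
  case 0
  have "{w. set w \<subseteq> A \<and> length w = 0 * m \<and> (\<forall>i<0. P i (block m w i))} = {[]}"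
    by auto
  then show ?case by simp
next
  case (Suc k)
  have "card {w. set w \<subseteq> A \<and> length w = Suc k * m \<and> (\<forall>i<Suc k. P i (block m w i))} =
      card {w. set w \<subseteq> A \<and> length w = m + k * m \<and> P 0 (take m w) \<and>
          (\<forall>i<k. P (Suc i) (block m (drop m w) i))}"
    by (rule arg_cong[where f = card]) (auto simp: All_less_Suc2)
  also have "\<dots> = card {u. set u \<subseteq> A \<and> length u = m \<and> P 0 u} *
      card {v. set v \<subseteq> A \<and> length v = k * m \<and> (\<forall>i<k. P (Suc i) (block m v i))}"
    by (rule card_lists_append[OF assms])
  also have "\<dots> = (\<Prod>i<Suc k. card {u. set u \<subseteq> A \<and> length u = m \<and> P i u})"
    unfolding prod.lessThan_Suc_shift using Suc.IH[of "\<lambda>i. P (Suc i)"] by simp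
  finally show ?case .
qed

lemma card_lists_block:
  assumes "finite A" "j < k"
  shows "card {w. set w \<subseteq> A \<and> length w = k * m \<and> P (block m w j)} =
    card A ^ ((k - 1) * m) * card {u. set u \<subseteq> A \<and> length u = m \<and> P u}"
proof -
  have "card {w. set w \<subseteq> A \<and> length w = k * m \<and> P (block m w j)} =
      card {w. set w \<subseteq> A \<and> length w = k * m \<and> (\<forall>i<k. (\<lambda>i u. i = j \<longrightarrow> P u) i (block m w i))}"
    using assms(2) by (intro arg_cong[where f = card]) auto
  also have "\<dots> = (\<Prod>i<k. card {u. set u \<subseteq> A \<and> length u = m \<and> (i = j \<longrightarrow> P u)})"
    by (rule card_lists_blocks[OF assms(1)])
  also have "\<dots> = (\<Prod>i<k. if i = j then card {u. set u \<subseteq> A \<and> length u = m \<and> P u} else card A ^ m)"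
    by (intro prod.cong refl) (simp add: card_lists_length_eq[OF assms(1)])
  also have "\<dots> = card A ^ ((k - 1) * m) * card {u. set u \<subseteq> A \<and> length u = m \<and> P u}"
    using assms(2) by (simp add: prod_gen_delta power_mult mult.commute)
  finally show ?thesis .
qed

lemma diameter_subsimplex_le_power_if_distinct_blocks:
  fixes T :: "'a::real_normed_vector list"
  assumes len: "length T = Suc d" and w: "set w \<subseteq> {0..<Suc d}" "length w = z * (k * d)"
    and distinct_blocks: "\<forall>j<z. \<exists>i<k. distinct (block d (block (k * d) w j) i)"
  shows "diameter (set (subsimplex T w)) \<le> (real d / (real d + 1)) ^ z * diameter (set T)"
proof (rule diameter_subsimplex_le_power[OF w(2)])
  show "0 \<le> real d / (real d + 1)" by simp
  fix j and S :: "'a list" assume j: "j < z" and S: "length S = length T"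
  obtain i where i: "i < k" and "distinct (block d (block (k * d) w j) i)"
    using distinct_blocks j by blast
  moreover have "length (block (k * d) w j) = k * d"
    using j w(2) mult_le_mono1[of "Suc j" z "k * d"] by (intro length_block) simp
  then have "length (block d (block (k * d) w j) i) = d"
    using i mult_le_mono1[of "Suc i" k d] by (intro length_block) simp
  moreover have "set (block (k * d) w j) \<subseteq> {0..<Suc d}"
    by (rule order_trans[OF set_block_subset w(1)])
  ultimately show "diameter (set (subsimplex S (block (k * d) w j))) \<le> real d / (real d + 1) * diameter (set S)"
    using diameter_subsimplex_distinct_block_le[of S "block (k * d) w j" i] S len
    by (simp add: add.commute)
qed

lemma Suc_power_le_exp_mult_fact: "real (Suc d) ^ d \<le> exp (real d) * fact (Suc d)"
proof (induction d)
  case 0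
  then show ?case by simp
next
  case (Suc d)
  let ?r = "1 + 1 / real (Suc d)"
  have "?r ^ d \<le> ?r ^ Suc d"
    by (intro power_increasing) simp_all
  also have "\<dots> \<le> exp 1"
    by (rule exp_ge_one_plus_x_over_n_power_n) simp_all
  finally have r: "?r ^ d \<le> exp 1" .
  have "real (Suc (Suc d)) ^ Suc d = real (Suc (Suc d)) * (real (Suc d) ^ d * ?r ^ d)"
    by (simp add: power_mult_distrib[symmetric] field_simps)
  also have "\<dots> \<le> real (Suc (Suc d)) * ((exp (real d) * fact (Suc d)) * exp 1)"
    using Suc.IH r by (intro mult_left_mono mult_mono) simp_all
  also have "\<dots> = exp (real (Suc d)) * fact (Suc (Suc d))"
    by (simp add: exp_add[symmetric] algebra_simps)
  finally show ?case .
qed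

lemma card_lists_not_distinct_le:
  "real (card {u. set u \<subseteq> {0..<Suc d} \<and> length u = d \<and> \<not> distinct u})
     \<le> (1 - exp (- real d)) * real (Suc d) ^ d"
proof -
  let ?A = "{0..<Suc d}"
  let ?D = "{u. length u = d \<and> distinct u \<and> set u \<subseteq> ?A}"
  have "{u. set u \<subseteq> ?A \<and> length u = d \<and> \<not> distinct u} = {u. set u \<subseteq> ?A \<and> length u = d} - ?D"
    by auto
  moreover have "?D \<subseteq> {u. set u \<subseteq> ?A \<and> length u = d}"
    by auto
  moreover have "finite ?D"
    by (rule finite_subset[OF _ finite_lists_length_eq[of ?A d]]) auto
  ultimately have "real (card {u. set u \<subseteq> ?A \<and> length u = d \<and> \<not> distinct u}) =
      real (card {u. set u \<subseteq> ?A \<and> length u = d}) - real (card ?D)"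
    by (simp add: card_Diff_subset card_mono finite_lists_length_eq of_nat_diff)
  also have "card ?D = fact (Suc d)"
    by (simp add: card_lists_distinct_length_eq fact_prod prod.atLeast_Suc_atMost numeral_2_eq_2)
  also have "real (card {u. set u \<subseteq> ?A \<and> length u = d}) = real (Suc d) ^ d"
    by (simp add: card_lists_length_eq)
  also have "real (Suc d) ^ d - real (fact (Suc d)) \<le> (1 - exp (- real d)) * real (Suc d) ^ d"
  proof -
    have "exp (- real d) * real (Suc d) ^ d \<le> fact (Suc d)"
      using Suc_power_le_exp_mult_fact[of d] by (simp add: exp_minus field_simps)
    then show ?thesis by (simp add: algebra_simps)
  qed
  finally show ?thesis .
qed

lemma card_lists_with_repeating_chunk_le:
  "real (card {w. set w \<subseteq> {0..<Suc d} \<and> length w = z * (k * d) \<and>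
       (\<exists>j<z. \<forall>i<k. \<not> distinct (block d (block (k * d) w j) i))})
     \<le> real z * (1 - exp (- real d)) ^ k * real (Suc d) ^ (z * (k * d))"
proof -
  let ?A = "{0..<Suc d}"
  let ?W = "\<lambda>j. {w. set w \<subseteq> ?A \<and> length w = z * (k * d) \<and> (\<forall>i<k. \<not> distinct (block d (block (k * d) w j) i))}"
  let ?q = "card {u. set u \<subseteq> ?A \<and> length u = d \<and> \<not> distinct u}"
  have chunk: "real (card (?W j)) = real (Suc d) ^ ((z - 1) * (k * d)) * real ?q ^ k" if "j < z" for j
    using card_lists_block[of ?A j z "k * d" "\<lambda>u. \<forall>i<k. \<not> distinct (block d u i)"]
      card_lists_blocks[of ?A k d "\<lambda>i u. \<not> distinct u"] that by simp
  have q: "real ?q ^ k \<le> (1 - exp (- real d)) ^ k * real (Suc d) ^ (k * d)"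
    using power_mono[OF card_lists_not_distinct_le[of d], where n = k]
    by (simp add: power_mult_distrib power_mult[symmetric] mult.commute)
  have W: "real (card (?W j)) \<le> (1 - exp (- real d)) ^ k * real (Suc d) ^ (z * (k * d))" if "j < z" for j
  proof -
    have "real (card (?W j)) \<le> real (Suc d) ^ ((z - 1) * (k * d)) * ((1 - exp (- real d)) ^ k * real (Suc d) ^ (k * d))"
      unfolding chunk[OF that] by (rule mult_left_mono[OF q]) simp
    also have "\<dots> = (1 - exp (- real d)) ^ k * real (Suc d) ^ ((z - 1) * (k * d) + k * d)"
      by (simp add: power_add)
    also have "(z - 1) * (k * d) + k * d = z * (k * d)"
      using that by (cases z) auto
    finally show ?thesis .
  qed
  have "{w. set w \<subseteq> ?A \<and> length w = z * (k * d) \<and> (\<exists>j<z. \<forall>i<k. \<not> distinct (block d (block (k * d) w j) i))}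
      = (\<Union>j<z. ?W j)"
    by auto
  then have "real (card {w. set w \<subseteq> ?A \<and> length w = z * (k * d) \<and>
       (\<exists>j<z. \<forall>i<k. \<not> distinct (block d (block (k * d) w j) i))}) \<le> real (\<Sum>j<z. card (?W j))"
    by (simp only: of_nat_le_iff card_UN_le finite_lessThan)
  also have "\<dots> \<le> (\<Sum>j<z. (1 - exp (- real d)) ^ k * real (Suc d) ^ (z * (k * d)))"
    unfolding of_nat_sum by (intro sum_mono W) simp
  finally show ?thesis by simp
qed

lemma card_large_subsimplices_le:
  fixes S :: "'a::real_normed_vector list"
  assumes len: "length S = Suc d" and diam: "diameter (set S) \<le> 1"
  shows "real (card {w. set w \<subseteq> {0..<Suc d} \<and> length w = z * (k * d) \<and>
             (real d / (real d + 1)) ^ z < diameter (set (subsimplex S w))})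
           \<le> real z * (1 - exp (- real d)) ^ k * real (Suc d) ^ (z * (k * d))"
proof -
  let ?c = "real d / (real d + 1)"
  let ?repeating = "\<lambda>w. \<exists>j<z. \<forall>i<k. \<not> distinct (block d (block (k * d) w j) i)"
  have "?repeating w" if w: "set w \<subseteq> {0..<Suc d}" "length w = z * (k * d)"
    and large: "?c ^ z < diameter (set (subsimplex S w))" for w
  proof (rule ccontr)
    assume "\<not> ?repeating w"
    then have "diameter (set (subsimplex S w)) \<le> ?c ^ z * diameter (set S)"
      by (intro diameter_subsimplex_le_power_if_distinct_blocks[OF len w]) auto
    also have "\<dots> \<le> ?c ^ z"
      using diam by (simp add: mult_left_le)
    finally show False
      using large by simp
  qed
  then have "card {w. set w \<subseteq> {0..<Suc d} \<and> length w = z * (k * d) \<and> ?c ^ z < diameter (set (subsimplex S w))}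
      \<le> card {w. set w \<subseteq> {0..<Suc d} \<and> length w = z * (k * d) \<and> ?repeating w}"
    by (intro card_mono finite_subset[OF _ finite_lists_length_eq[of "{0..<Suc d}" "z * (k * d)"]]) auto
  then show ?thesis
    using card_lists_with_repeating_chunk_le[of d z k] by linarith
qed

lemma regular_unit_simplex_diameter_le_1:
  fixes S :: "'a::real_normed_vector list"
  assumes "regular_unit_simplex S d"
  shows "diameter (set S) \<le> 1"
proof (rule diameter_le)
  fix x y assume "x \<in> set S" "y \<in> set S"
  then obtain i j where "i < length S" "j < length S" "x = S ! i" "y = S ! j"
    by (auto simp: in_set_conv_nth)
  with assms show "norm (x - y) \<le> 1"
    by (cases "i = j") (auto simp: regular_unit_simplex_def dist_norm)
qed simp

theorem lemma4:
  fixes S :: "(real^'n) list" and k z :: nat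
  assumes "regular_unit_simplex S CARD('n)" and "k \<ge> 1" and "z \<ge> 1"
  shows "real (length (filter (\<lambda>T. diameter (set T) > (real CARD('n) / (real CARD('n) + 1)) ^ z)
                  (subdiv (z * k * CARD('n)) S)))
         \<le> real z * (1 - exp (- real CARD('n))) ^ k * real (length (subdiv (z * k * CARD('n)) S))"
proof -
  have len: "length S = Suc CARD('n)"
    using assms(1) by (simp add: regular_unit_simplex_def)
  show ?thesis
    using card_large_subsimplices_le[OF len regular_unit_simplex_diameter_le_1[OF assms(1)], of z k]
    by (simp add: length_filter_subdiv length_subdiv len mult.assoc)
qed

end
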